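(* Consider the planar system \[ \frac{dx}{dt}= x\Big(1-\frac{x}{\gamma}\Big)-\frac{xy}{(1+\alpha\xi)(\omega x^2+1)+x},\qquad \frac{dy}{dt}= \frac{\delta\big(x+\xi(\omega x^2+1)\big)y}{(1+\alpha\xi)(\omega x^2+1)+x}-my-\epsilon y^2, \] with positive parameters $\gamma,\alpha,\xi,\omega,\delta,m,\epsilon$ satisfying $\delta>m$. The equilibrium $E_2=\Big(0,\frac{\delta\xi-m(1+\alpha\xi)}{\epsilon(1+\alpha\xi)}\Big)$ lies in the positive $xy$-quadrant and is a stable node if $\delta\xi-m(1+\alpha\xi)>0$ and $\delta\xi-m(1+\alpha\xi)>\epsilon(1+\alpha\xi)^2$; it lies in the positive $xy$-quadrant and is a saddle if $\delta\xi-m(1+\alpha\xi)>0$ and $\delta\xi-m(1+\alpha\xi)<\epsilon(1+\alpha\xi)^2$.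
   Context: $x$ and $y$ are prey (pest) and predator densities; $\alpha$ and $\xi$ are the quality and quantity of additional food for predators, $\epsilon$ is the predator intra-specific competition coefficient. Stability type refers to the linearization (Jacobian) at the equilibrium. *)

theory Defs
  imports "HOL-Analysis.Analysis"
begin

definition denom :: "real \<Rightarrow> real \<Rightarrow> real \<Rightarrow> real \<Rightarrow> real" where
  "denom \<alpha> \<xi> \<omega> x = (1 + \<alpha> * \<xi>) * (\<omega> * x^2 + 1) + x"

definition field ::
  "real \<Rightarrow> real \<Rightarrow> real \<Rightarrow> real \<Rightarrow> real \<Rightarrow> real \<Rightarrow> real \<Rightarrow> real \<times> real \<Rightarrow> real \<times> real" where
  "field \<gamma> \<alpha> \<xi> \<omega> \<delta> m \<epsilon> p = (case p of (x, y) \<Rightarrow>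
     ( x * (1 - x / \<gamma>) - x * y / denom \<alpha> \<xi> \<omega> x,
       \<delta> * (x + \<xi> * (\<omega> * x^2 + 1)) * y / denom \<alpha> \<xi> \<omega> x - m * y - \<epsilon> * y^2 ))"

definition jacobian_at ::
  "(real \<times> real \<Rightarrow> real \<times> real) \<Rightarrow> real \<times> real \<Rightarrow> real \<Rightarrow> real \<Rightarrow> real \<Rightarrow> real \<Rightarrow> bool" where
  "jacobian_at F p a b c d \<longleftrightarrow>
     (F has_derivative (\<lambda>(h1, h2). (a * h1 + b * h2, c * h1 + d * h2))) (at p)"

definition eigenvalues2 :: "real \<Rightarrow> real \<Rightarrow> real \<Rightarrow> real \<Rightarrow> complex set" where
  "eigenvalues2 a b c d =
     {z. (complex_of_real a - z) * (complex_of_real d - z) - complex_of_real b * complex_of_real c = 0}"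

definition stable_node2 :: "real \<Rightarrow> real \<Rightarrow> real \<Rightarrow> real \<Rightarrow> bool" where
  "stable_node2 a b c d \<longleftrightarrow> (\<forall>z\<in>eigenvalues2 a b c d. Im z = 0 \<and> Re z < 0)"

definition saddle2 :: "real \<Rightarrow> real \<Rightarrow> real \<Rightarrow> real \<Rightarrow> bool" where
  "saddle2 a b c d \<longleftrightarrow> (\<forall>z\<in>eigenvalues2 a b c d. Im z = 0)
     \<and> (\<exists>z\<in>eigenvalues2 a b c d. Re z > 0) \<and> (\<exists>z\<in>eigenvalues2 a b c d. Re z < 0)"

end

(* At E2 the prey is absent, so the prey equation has no y-to-x coupling there: the Jacobian
   is lower triangular and its eigenvalues are its diagonal entries.  The predator entry equals
   -eps y < 0, and the prey entry 1 - y/(1 + alpha xi) is the per-capita prey growth rate at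
   the predator level y, which is negative exactly when y > 1 + alpha xi, i.e. when
   delta xi - m (1 + alpha xi) > eps (1 + alpha xi)^2. *)
theory Submission
  imports Defs
begin

lemma eigenvalues2_lower_triangular: "eigenvalues2 a 0 c d = {complex_of_real a, complex_of_real d}"
  unfolding eigenvalues2_def by auto

lemma stable_node2_lower_triangular_iff: "stable_node2 a 0 c d \<longleftrightarrow> a < 0 \<and> d < 0"
  unfolding stable_node2_def eigenvalues2_lower_triangular by auto

lemma saddle2_lower_triangular_iff: "saddle2 a 0 c d \<longleftrightarrow> a * d < 0"
  unfolding saddle2_def eigenvalues2_lower_triangular by (auto simp: mult_less_0_iff)

lemma stable_node2_y_axis_iff:
  assumes "K > 0" "\<epsilon> > 0" "y > 0"
  shows "stable_node2 (1 - y / K) 0 c (- (\<epsilon> * y)) \<longleftrightarrow> y > K"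
  using assms by (simp add: stable_node2_lower_triangular_iff field_simps)

lemma saddle2_y_axis_iff:
  assumes "K > 0" "\<epsilon> > 0" "y > 0"
  shows "saddle2 (1 - y / K) 0 c (- (\<epsilon> * y)) \<longleftrightarrow> y < K"
  using assms by (simp add: saddle2_lower_triangular_iff mult_less_0_iff field_simps)

lemma field_y_axis:
  "field \<gamma> \<alpha> \<xi> \<omega> \<delta> m \<epsilon> (0, y) = (0, y * (\<delta> * \<xi> / (1 + \<alpha> * \<xi>) - m - \<epsilon> * y))"
  by (simp add: field_def denom_def algebra_simps power2_eq_square)

lemma jacobian_at_field_y_axis:
  assumes "\<gamma> \<noteq> 0" "1 + \<alpha> * \<xi> \<noteq> 0"
  shows "jacobian_at (field \<gamma> \<alpha> \<xi> \<omega> \<delta> m \<epsilon>) (0, y)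
     (1 - y / (1 + \<alpha> * \<xi>)) 0 (\<delta> * y * (1 + \<alpha> * \<xi> - \<xi>) / (1 + \<alpha> * \<xi>)^2)
     (\<delta> * \<xi> / (1 + \<alpha> * \<xi>) - m - 2 * \<epsilon> * y)"
proof -
  have field_components: "field \<gamma> \<alpha> \<xi> \<omega> \<delta> m \<epsilon> = (\<lambda>p.
      (fst p * (1 - fst p / \<gamma>) - fst p * snd p / denom \<alpha> \<xi> \<omega> (fst p),
       \<delta> * (fst p + \<xi> * (\<omega> * fst p ^ 2 + 1)) * snd p / denom \<alpha> \<xi> \<omega> (fst p)
         - m * snd p - \<epsilon> * snd p ^ 2))"
    by (auto simp: field_def fun_eq_iff)
  show ?thesis
    unfolding jacobian_at_def field_components denom_def
    by (rule has_derivative_eq_rhs, (rule derivative_eq_intros refl | simp add: assms)+)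
      (use assms in \<open>auto simp: fun_eq_iff divide_simps; algebra\<close>)
qed

theorem mainTheorem4:
  fixes \<gamma> \<alpha> \<xi> \<omega> \<delta> m \<epsilon> :: real
  assumes pos: "\<gamma> > 0" "\<alpha> > 0" "\<xi> > 0" "\<omega> > 0" "\<delta> > 0" "m > 0" "\<epsilon> > 0"
    and dm: "\<delta> > m"
  defines "E2 \<equiv> (0::real, (\<delta> * \<xi> - m * (1 + \<alpha> * \<xi>)) / (\<epsilon> * (1 + \<alpha> * \<xi>)))"
  shows
   "(\<delta> * \<xi> - m * (1 + \<alpha> * \<xi>) > 0 \<and> \<delta> * \<xi> - m * (1 + \<alpha> * \<xi>) > \<epsilon> * (1 + \<alpha> * \<xi>)^2 \<longrightarrow>
       field \<gamma> \<alpha> \<xi> \<omega> \<delta> m \<epsilon> E2 = (0, 0) \<and> fst E2 \<ge> 0 \<and> snd E2 > 0 \<and>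
       (\<exists>a b c d. jacobian_at (field \<gamma> \<alpha> \<xi> \<omega> \<delta> m \<epsilon>) E2 a b c d \<and> stable_node2 a b c d))
  \<and> (\<delta> * \<xi> - m * (1 + \<alpha> * \<xi>) > 0 \<and> \<delta> * \<xi> - m * (1 + \<alpha> * \<xi>) < \<epsilon> * (1 + \<alpha> * \<xi>)^2 \<longrightarrow>
       field \<gamma> \<alpha> \<xi> \<omega> \<delta> m \<epsilon> E2 = (0, 0) \<and> fst E2 \<ge> 0 \<and> snd E2 > 0 \<and>
       (\<exists>a b c d. jacobian_at (field \<gamma> \<alpha> \<xi> \<omega> \<delta> m \<epsilon>) E2 a b c d \<and> saddle2 a b c d))"
proof -
  define K where "K = 1 + \<alpha> * \<xi>"
  define D where "D = \<delta> * \<xi> - m * K"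
  define y where "y = D / (\<epsilon> * K)"
  have K: "K > 0" using pos unfolding K_def by (simp add: add_pos_pos)
  have E2: "E2 = (0, y)" unfolding E2_def y_def D_def K_def ..
  have growth: "\<delta> * \<xi> / K - m = \<epsilon> * y"
    using K pos(7) by (simp add: y_def D_def field_simps)
  have equilibrium: "field \<gamma> \<alpha> \<xi> \<omega> \<delta> m \<epsilon> E2 = (0, 0)"
    unfolding E2 field_y_axis K_def[symmetric] growth by simp
  obtain c where jacobian: "jacobian_at (field \<gamma> \<alpha> \<xi> \<omega> \<delta> m \<epsilon>) E2 (1 - y / K) 0 c (- (\<epsilon> * y))"
    using jacobian_at_field_y_axis[of \<gamma> \<alpha> \<xi> \<omega> \<delta> m \<epsilon> y] pos(1) K growth
    unfolding E2 K_def[symmetric] by auto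
  have y_pos: "y > 0 \<longleftrightarrow> D > 0"
    using mult_pos_pos[OF pos(7) K] by (simp add: y_def zero_less_divide_iff)
  have y_vs_K: "y > K \<longleftrightarrow> D > \<epsilon> * K^2" "y < K \<longleftrightarrow> D < \<epsilon> * K^2"
    using K pos(7) by (simp_all add: y_def field_simps power2_eq_square)
  show ?thesis
    unfolding K_def[symmetric] D_def[symmetric]
    using equilibrium jacobian y_pos y_vs_K K pos(7)
      stable_node2_y_axis_iff[of K \<epsilon> y c] saddle2_y_axis_iff[of K \<epsilon> y c]
    by (auto simp: E2)
qed

end
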